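(* Let $(\mathcal{Z},d)$ be a Polish metric space, $p\in(1,\infty)$, $q=p/(p-1)$, $\alpha>0$, $\mathbb{P}\in\mathcal{P}_p(\mathcal{Z})$. Let $\ell:\mathcal{Z}\to\mathbb{R}$ be Borel and integrable with respect to every $\mathbb{Q}\in\mathfrak{W}^\alpha_p(\mathbb{P})$, and let $G:\mathcal{Z}\to[0,\infty)$ be Borel. Assume that for every $z,z'\in\mathcal{Z}$ there is a constant-speed geodesic $\varrho:[0,1]\to\mathcal{Z}$ with $\varrho(0)=z$, $\varrho(1)=z'$ such that $$|\ell(z')-\ell(z)|\le\Big(\int_0^1G(\varrho(t))\,dt\Big)\,d(z,z')\quad\text{and}\quad G(\varrho(t))\le(1-t)G(z)+tG(z')\ \ \forall t\in[0,1].$$ Let $\mu=\sup_{\mathbb{Q}\in\mathfrak{W}^\alpha_p(\mathbb{P})}\big(\mathbb{E}_{z\sim\mathbb{Q}}[G(z)^q]\big)^{1/q}$. Then for every $\mathbb{Q}\in\mathfrak{W}^\alpha_p(\mathbb{P})$, $$R_{\mathbb{Q}}(\ell)\le R_{\mathbb{P},\alpha,p}(\ell)\le R_{\mathbb{Q}}(\ell)+2\alpha\mu.$$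
   Context: A constant-speed geodesic from $z$ to $z'$ is a map $\varrho:[0,1]\to\mathcal{Z}$ with $\varrho(0)=z$, $\varrho(1)=z'$ and $d(\varrho(s),\varrho(t))=(t-s)\,d(z,z')$ for $0\le s\le t\le1$. $\mathcal{P}_p(\mathcal{Z})$ is the set of Borel probability measures with finite $p$-th moment; $\mathcal{W}_p(\mathbb{P},\mathbb{Q})=\big(\inf_{\gamma\in\Gamma(\mathbb{P},\mathbb{Q})}\int d(z,z')^p\,d\gamma\big)^{1/p}$ over couplings $\gamma$; $\mathfrak{W}^\alpha_p(\mathbb{P})=\{\mathbb{Q}\in\mathcal{P}_p(\mathcal{Z}):\mathcal{W}_p(\mathbb{P},\mathbb{Q})\le\alpha\}$; $R_{\mathbb{Q}}(\ell)=\int\ell\,d\mathbb{Q}$ and $R_{\mathbb{P},\alpha,p}(\ell)=\sup_{\mathbb{Q}\in\mathfrak{W}^\alpha_p(\mathbb{P})}R_{\mathbb{Q}}(\ell)$. *)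

theory Defs
  imports "HOL-Probability.Probability"
begin

definition borel_prob :: "'a::metric_space measure \<Rightarrow> bool" where
  "borel_prob P \<longleftrightarrow> prob_space P \<and> sets P = sets borel"

definition Pp :: "real \<Rightarrow> 'a::metric_space measure set" where
  "Pp p = {P. borel_prob P \<and> (\<exists>z0. (\<integral>\<^sup>+ z. ennreal (dist z0 z powr p) \<partial>P) < \<infinity>)}"

definition couplings :: "'a::metric_space measure \<Rightarrow> 'a measure \<Rightarrow> ('a \<times> 'a) measure set" where
  "couplings P Q = {\<gamma>. prob_space \<gamma> \<and> sets \<gamma> = sets (borel \<Otimes>\<^sub>M borel)
                        \<and> distr \<gamma> borel fst = P \<and> distr \<gamma> borel snd = Q}"

text \<open>p-Wasserstein distance (finite for P, Q in P_p).\<close>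
definition wasserstein :: "real \<Rightarrow> 'a::metric_space measure \<Rightarrow> 'a measure \<Rightarrow> real" where
  "wasserstein p P Q =
     (enn2real (INF \<gamma>\<in>couplings P Q. \<integral>\<^sup>+ x. ennreal (dist (fst x) (snd x) powr p) \<partial>\<gamma>)) powr (1/p)"

definition wball :: "real \<Rightarrow> real \<Rightarrow> 'a::metric_space measure \<Rightarrow> 'a measure set" where
  "wball p \<alpha> P = {Q \<in> Pp p. wasserstein p P Q \<le> \<alpha>}"

definition risk :: "'a measure \<Rightarrow> ('a \<Rightarrow> real) \<Rightarrow> real" where
  "risk Q l = (\<integral>z. l z \<partial>Q)"

definition worst_risk :: "real \<Rightarrow> real \<Rightarrow> 'a::metric_space measure \<Rightarrow> ('a \<Rightarrow> real) \<Rightarrow> ereal" where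
  "worst_risk p \<alpha> P l = (SUP Q\<in>wball p \<alpha> P. ereal (risk Q l))"

definition constant_speed_geodesic :: "(real \<Rightarrow> 'a::metric_space) \<Rightarrow> 'a \<Rightarrow> 'a \<Rightarrow> bool" where
  "constant_speed_geodesic \<rho> z z' \<longleftrightarrow> \<rho> 0 = z \<and> \<rho> 1 = z' \<and>
     (\<forall>s t. 0 \<le> s \<longrightarrow> s \<le> t \<longrightarrow> t \<le> 1 \<longrightarrow> dist (\<rho> s) (\<rho> t) = (t - s) * dist z z')"

definition Lq_norm :: "real \<Rightarrow> 'a measure \<Rightarrow> ('a \<Rightarrow> real) \<Rightarrow> ereal" where
  "Lq_norm q Q G = (let I = (\<integral>\<^sup>+ z. ennreal (G z powr q) \<partial>Q) in
     if I = \<infinity> then \<infinity> else ereal (enn2real I powr (1/q)))"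

end

theory Submission
  imports Defs
begin

text \<open>Convexity of \<open>G\<close> along the path turns the path bound into the two-point estimate
\<open>\<bar>l z' - l z\<bar> \<le> (G z + G z') / 2 * dist z z'\<close>. Integrating it against a nearly optimal coupling
of two measures \<open>A\<close>, \<open>B\<close> and applying H\<ouml>lder's inequality to each half bounds
\<open>\<bar>R\<^sub>B(l) - R\<^sub>A(l)\<bar>\<close> by \<open>\<mu> * W\<^sub>p(A, B)\<close>. Comparing every measure of the ball with its centre
\<open>P\<close> then shows that no risk in the ball exceeds \<open>R\<^sub>Q(l)\<close> by more than \<open>2 \<alpha> \<mu>\<close>.\<close>

lemma interval_integral_01_le_chord_average:
  fixes f :: "real \<Rightarrow> real"
  assumes "0 \<le> a + b" and below: "\<forall>t\<in>{0..1}. f t \<le> (1 - t) * a + t * b"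
  shows "(LBINT t=0..1. f t) \<le> (a + b) / 2"
proof -
  have Icc: "(LBINT t=0..1. h t) = (LBINT t:{0..1}. h t)" for h :: "real \<Rightarrow> real"
    using interval_integral_Icc[of 0 1 h] by (simp add: zero_ereal_def one_ereal_def)
  have "interval_lebesgue_integral lborel (ereal 0) (ereal 1) (\<lambda>t. (1 - t) * a + t * b)
      = (1 * a - 1 * 1 / 2 * a + 1 * 1 / 2 * b) - (0 * a - 0 * 0 / 2 * a + 0 * 0 / 2 * b)"
    by (rule interval_integral_FTC_finite[where F = "\<lambda>t. t * a - t * t / 2 * a + t * t / 2 * b"])
      (auto intro!: continuous_intros derivative_eq_intros simp: field_simps)
  then have chord: "(LBINT t:{0..1}. (1 - t) * a + t * b) = (a + b) / 2"
    by (simp add: Icc[symmetric] zero_ereal_def one_ereal_def)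
  show ?thesis
  proof (cases "set_integrable lborel {0..1::real} f")
    case True
    have "(LBINT t:{0..1}. f t) \<le> (LBINT t:{0..1}. (1 - t) * a + t * b)"
      by (rule set_integral_mono[OF True]) (use below in \<open>auto intro!: borel_integrable_atLeastAtMost' continuous_intros\<close>)
    then show ?thesis by (simp add: Icc chord)
  next
    case False
    then have "(LBINT t:{0..1}. f t) = 0"
      by (simp add: set_lebesgue_integral_def set_integrable_def not_integrable_integral_eq)
    then show ?thesis using \<open>0 \<le> a + b\<close> by (simp add: Icc)
  qed
qed

lemma abs_diff_le_mean_slope_of_path:
  fixes l G :: "'a::metric_space \<Rightarrow> real" and \<rho> :: "real \<Rightarrow> 'a"
  assumes "0 \<le> G z" "0 \<le> G z'"
    and "\<bar>l z' - l z\<bar> \<le> (LBINT t=0..1. G (\<rho> t)) * dist z z'"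
    and "\<forall>t\<in>{0..1}. G (\<rho> t) \<le> (1 - t) * G z + t * G z'"
  shows "\<bar>l z' - l z\<bar> \<le> (G z + G z') / 2 * dist z z'"
proof -
  have "(LBINT t=0..1. G (\<rho> t)) \<le> (G z + G z') / 2"
    using assms(1,2,4) by (intro interval_integral_01_le_chord_average) simp_all
  then show ?thesis
    using assms(3) by (meson order.trans mult_right_mono zero_le_dist)
qed

lemma powr_add3_le:
  fixes a b c p :: real
  assumes "0 \<le> a" "0 \<le> b" "0 \<le> c" "0 < p"
  shows "(a + b + c) powr p \<le> 3 powr p * (a powr p + b powr p + c powr p)"
proof -
  define m where "m = max a (max b c)"
  have "(a + b + c) powr p \<le> (3 * m) powr p"
    by (rule powr_mono2) (use assms in \<open>auto simp: m_def\<close>)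
  also have "\<dots> = 3 powr p * m powr p"
    using assms by (simp add: powr_mult m_def)
  also have "m powr p \<le> a powr p + b powr p + c powr p"
    using assms by (auto simp: m_def max_def)
  finally show ?thesis by simp
qed

lemma nn_integral_Holder:
  fixes f g :: "'b \<Rightarrow> real"
  assumes "1 < p" "1 < q" "1/p + 1/q = 1"
    and [measurable]: "f \<in> borel_measurable M" "g \<in> borel_measurable M"
    and f_nonneg: "\<And>x. 0 \<le> f x" and g_nonneg: "\<And>x. 0 \<le> g x"
    and f_norm: "(\<integral>\<^sup>+x. ennreal (f x powr p) \<partial>M) = ennreal A" and "0 \<le> A"
    and g_norm: "(\<integral>\<^sup>+x. ennreal (g x powr q) \<partial>M) = ennreal B" and "0 \<le> B"
  shows "(\<integral>\<^sup>+x. ennreal (f x * g x) \<partial>M) \<le> ennreal (A powr (1/p) * B powr (1/q))"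
proof (cases "A = 0 \<or> B = 0")
  case True
  have "AE x in M. f x = 0" if "A = 0"
    using f_norm that nn_integral_0_iff_AE[of "\<lambda>x. ennreal (f x powr p)" M] by simp
  moreover have "AE x in M. g x = 0" if "B = 0"
    using g_norm that nn_integral_0_iff_AE[of "\<lambda>x. ennreal (g x powr q)" M] by simp
  ultimately have "AE x in M. f x = 0 \<or> g x = 0"
    using True by (auto elim: AE_mp)
  then have "(\<integral>\<^sup>+x. ennreal (f x * g x) \<partial>M) = 0"
    by (subst nn_integral_0_iff_AE) (auto elim: AE_mp)
  then show ?thesis by simp
next
  case False
  then have "0 < A" "0 < B" using \<open>0 \<le> A\<close> \<open>0 \<le> B\<close> by auto
  define a b where "a = A powr (1/p)" and "b = B powr (1/q)"
  have "0 < a" "0 < b" using \<open>0 < A\<close> \<open>0 < B\<close> by (auto simp: a_def b_def)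
  have "a powr p = A" "b powr q = B"
    using \<open>0 < A\<close> \<open>0 < B\<close> assms(1,2) by (simp_all add: a_def b_def powr_powr)
  have Young: "f x * g x \<le> a * b / (p * A) * f x powr p + a * b / (q * B) * g x powr q" for x
  proof -
    have "(f x / a) * (g x / b) \<le> (f x / a) powr p / p + (g x / b) powr q / q"
      using Youngs_inequality[of p q "f x / a" "g x / b"] assms(1-3) \<open>0 < a\<close> \<open>0 < b\<close> f_nonneg g_nonneg
      by simp
    also have "\<dots> = f x powr p / (p * A) + g x powr q / (q * B)"
      using \<open>a powr p = A\<close> \<open>b powr q = B\<close> f_nonneg g_nonneg \<open>0 < a\<close> \<open>0 < b\<close> by (simp add: powr_divide mult.commute)
    finally show ?thesis using \<open>0 < a\<close> \<open>0 < b\<close> by (simp add: field_simps)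
  qed
  have "(\<integral>\<^sup>+x. ennreal (f x * g x) \<partial>M) \<le>
      (\<integral>\<^sup>+x. ennreal (a * b / (p * A)) * ennreal (f x powr p) + ennreal (a * b / (q * B)) * ennreal (g x powr q) \<partial>M)"
    using Young \<open>0 < a\<close> \<open>0 < b\<close> \<open>0 < A\<close> \<open>0 < B\<close> assms(1,2)
    by (intro nn_integral_mono) (simp add: ennreal_mult[symmetric] ennreal_plus[symmetric] ennreal_leI del: ennreal_plus)
  also have "\<dots> = ennreal (a * b / (p * A)) * ennreal A + ennreal (a * b / (q * B)) * ennreal B"
    by (simp add: nn_integral_add nn_integral_cmult f_norm g_norm)
  also have "\<dots> = ennreal (a * b * (1/p + 1/q))"
    using \<open>0 < a\<close> \<open>0 < b\<close> \<open>0 < A\<close> \<open>0 < B\<close> assms(1,2)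
    by (simp add: ennreal_mult[symmetric] ennreal_plus[symmetric] field_simps del: ennreal_plus)
  finally show ?thesis using assms(3) by (simp add: a_def b_def)
qed

definition transport_cost :: "real \<Rightarrow> ('a::metric_space \<times> 'a) measure \<Rightarrow> ennreal" where
  "transport_cost p \<gamma> = (\<integral>\<^sup>+x. ennreal (dist (fst x) (snd x) powr p) \<partial>\<gamma>)"

lemma wasserstein_eq_INF_transport_cost:
  "wasserstein p P Q = enn2real (INF \<gamma>\<in>couplings P Q. transport_cost p \<gamma>) powr (1/p)"
  by (simp add: wasserstein_def transport_cost_def)

lemma Pp_imp_borel_prob: "P \<in> Pp p \<Longrightarrow> borel_prob P"
  by (simp add: Pp_def)

lemma borel_probD:
  assumes "borel_prob P"
  shows "prob_space P" and "sets P = sets borel"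
  using assms by (simp_all add: borel_prob_def)

lemma couplingsD:
  assumes "\<gamma> \<in> couplings A B"
  shows prob_space_coupling: "prob_space \<gamma>"
    and coupling_fst: "fst \<in> \<gamma> \<rightarrow>\<^sub>M borel" "distr \<gamma> borel fst = A"
    and coupling_snd: "snd \<in> \<gamma> \<rightarrow>\<^sub>M borel" "distr \<gamma> borel snd = B"
proof -
  have sets_pair: "sets \<gamma> = sets (borel \<Otimes>\<^sub>M borel)"
    using assms by (simp add: couplings_def)
  show "prob_space \<gamma>" "distr \<gamma> borel fst = A" "distr \<gamma> borel snd = B"
    using assms by (simp_all add: couplings_def)
  show "fst \<in> \<gamma> \<rightarrow>\<^sub>M borel" "snd \<in> \<gamma> \<rightarrow>\<^sub>M borel"
    by (simp_all add: measurable_cong_sets[OF sets_pair refl])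
qed

lemma nn_integral_marginal:
  assumes "\<pi> \<in> \<gamma> \<rightarrow>\<^sub>M borel" "distr \<gamma> borel \<pi> = R" "h \<in> borel_measurable borel"
  shows "(\<integral>\<^sup>+x. h (\<pi> x) \<partial>\<gamma>) = (\<integral>\<^sup>+z. h z \<partial>R)"
  using nn_integral_distr[OF assms(1), of h, simplified] assms(2,3) by simp

lemma integral_marginal:
  fixes h :: "'a::topological_space \<Rightarrow> real"
  assumes "\<pi> \<in> \<gamma> \<rightarrow>\<^sub>M borel" "distr \<gamma> borel \<pi> = R" "h \<in> borel_measurable borel" "integrable R h"
  shows "integrable \<gamma> (\<lambda>x. h (\<pi> x))" and "(\<integral>x. h (\<pi> x) \<partial>\<gamma>) = (\<integral>z. h z \<partial>R)"
  using integrable_distr_eq[OF assms(1,3)] integral_distr[OF assms(1,3)] assms(2,4) by simp_all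

lemma distr_pair_snd:
  assumes "prob_space A" "prob_space B"
  shows "distr (A \<Otimes>\<^sub>M B) B snd = B"
proof (intro measure_eqI)
  interpret A: prob_space A by fact
  interpret B: prob_space B by fact
  interpret pair_sigma_finite A B ..
  fix X assume "X \<in> sets (distr (A \<Otimes>\<^sub>M B) B snd)"
  then have X: "X \<in> sets B" by simp
  then have "snd -` X \<inter> space (A \<Otimes>\<^sub>M B) = space A \<times> X"
    using sets.sets_into_space[OF X] by (auto simp: space_pair_measure)
  then show "emeasure (distr (A \<Otimes>\<^sub>M B) B snd) X = emeasure B X"
    using X by (simp add: emeasure_distr B.emeasure_pair_measure_Times A.emeasure_space_1)
qed simp

lemma pair_measure_in_couplings:
  assumes "borel_prob A" "borel_prob B"
  shows "A \<Otimes>\<^sub>M B \<in> couplings A B"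
proof -
  note A = borel_probD[OF assms(1)] and B = borel_probD[OF assms(2)]
  have "distr (A \<Otimes>\<^sub>M B) borel fst = distr (A \<Otimes>\<^sub>M B) A fst"
    by (rule distr_cong) (simp_all add: A)
  also have "\<dots> = A" by (rule prob_space.distr_pair_fst[OF B(1)])
  finally have "distr (A \<Otimes>\<^sub>M B) borel fst = A" .
  moreover have "distr (A \<Otimes>\<^sub>M B) borel snd = distr (A \<Otimes>\<^sub>M B) B snd"
    by (rule distr_cong) (simp_all add: B)
  moreover have "sets (A \<Otimes>\<^sub>M B) = sets (borel \<Otimes>\<^sub>M borel)"
    by (rule sets_pair_measure_cong[OF A(2) B(2)])
  ultimately show ?thesis
    by (simp add: couplings_def prob_space_pair A(1) B(1) distr_pair_snd)
qed

lemma diagonal_in_couplings: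
  assumes "borel_prob A"
  shows "distr A (borel \<Otimes>\<^sub>M borel) (\<lambda>z. (z, z)) \<in> couplings A A"
proof -
  note A = borel_probD[OF assms]
  have diag: "(\<lambda>z. (z, z)) \<in> A \<rightarrow>\<^sub>M borel \<Otimes>\<^sub>M borel"
    by (simp add: measurable_cong_sets[OF A(2) refl])
  have "distr (distr A (borel \<Otimes>\<^sub>M borel) (\<lambda>z. (z, z))) borel \<pi> = A"
    if "\<pi> \<in> (borel \<Otimes>\<^sub>M borel) \<rightarrow>\<^sub>M borel" "\<And>z. \<pi> (z, z) = z" for \<pi>
  proof -
    have "distr (distr A (borel \<Otimes>\<^sub>M borel) (\<lambda>z. (z, z))) borel \<pi> = distr A borel (\<lambda>z. z)"
      using distr_distr[OF that(1) diag] that(2) by (simp add: comp_def)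
    also have "\<dots> = A" by (rule distr_id2) (simp add: A)
    finally show ?thesis .
  qed
  then show ?thesis
    using prob_space.prob_space_distr[OF A(1) diag] by (simp add: couplings_def)
qed

lemma wasserstein_self:
  fixes A :: "'a::{metric_space,second_countable_topology} measure"
  assumes "borel_prob A"
  shows "wasserstein p A A = 0"
proof -
  define \<delta> where "\<delta> = distr A (borel \<Otimes>\<^sub>M borel) (\<lambda>z. (z, z))"
  have diag: "(\<lambda>z. (z, z)) \<in> A \<rightarrow>\<^sub>M borel \<Otimes>\<^sub>M borel"
    by (simp add: measurable_cong_sets[OF borel_probD(2)[OF assms] refl])
  have "transport_cost p \<delta> = (\<integral>\<^sup>+z. ennreal (dist z z powr p) \<partial>A)"
    unfolding transport_cost_def \<delta>_def by (subst nn_integral_distr[OF diag]) simp_all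
  then have "transport_cost p \<delta> = 0" by simp
  moreover have "\<delta> \<in> couplings A A"
    unfolding \<delta>_def by (rule diagonal_in_couplings[OF assms])
  ultimately have "(INF \<gamma>\<in>couplings A A. transport_cost p \<gamma>) = 0"
    by (metis INF_lower le_zero_eq)
  then show ?thesis by (simp add: wasserstein_eq_INF_transport_cost)
qed

lemma transport_cost_pair_measure_finite:
  fixes A B :: "'a::{metric_space,second_countable_topology} measure"
  assumes "A \<in> Pp p" "B \<in> Pp p" "0 < p"
  shows "transport_cost p (A \<Otimes>\<^sub>M B) < \<infinity>"
proof -
  obtain z0 z1 where z0: "(\<integral>\<^sup>+z. ennreal (dist z0 z powr p) \<partial>A) < \<infinity>"
    and z1: "(\<integral>\<^sup>+z. ennreal (dist z1 z powr p) \<partial>B) < \<infinity>"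
    using assms(1,2) by (auto simp: Pp_def)
  define \<gamma> where "\<gamma> = A \<Otimes>\<^sub>M B"
  have \<gamma>: "\<gamma> \<in> couplings A B"
    unfolding \<gamma>_def using assms(1,2) by (simp add: pair_measure_in_couplings Pp_imp_borel_prob)
  interpret prob_space \<gamma> by (rule prob_space_coupling[OF \<gamma>])
  note [measurable] = coupling_fst(1)[OF \<gamma>] coupling_snd(1)[OF \<gamma>]
  define c where "c = 3 powr p"
  have "transport_cost p \<gamma> \<le> (\<integral>\<^sup>+x. ennreal c * ennreal (dist z0 (fst x) powr p)
      + ennreal (c * dist z0 z1 powr p) + ennreal c * ennreal (dist z1 (snd x) powr p) \<partial>\<gamma>)"
    unfolding transport_cost_def
  proof (rule nn_integral_mono)
    fix x :: "'a \<times> 'a"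
    have "dist (fst x) (snd x) \<le> dist z0 (fst x) + dist z0 z1 + dist z1 (snd x)"
      using dist_triangle[of "fst x" "snd x" z0] dist_triangle[of z0 "snd x" z1]
      by (simp add: dist_commute)
    then have "dist (fst x) (snd x) powr p \<le> (dist z0 (fst x) + dist z0 z1 + dist z1 (snd x)) powr p"
      using assms(3) by (simp add: powr_mono2)
    also have "\<dots> \<le> c * (dist z0 (fst x) powr p + dist z0 z1 powr p + dist z1 (snd x) powr p)"
      unfolding c_def using assms(3) by (simp add: powr_add3_le)
    finally show "ennreal (dist (fst x) (snd x) powr p) \<le> ennreal c * ennreal (dist z0 (fst x) powr p)
        + ennreal (c * dist z0 z1 powr p) + ennreal c * ennreal (dist z1 (snd x) powr p)"
      by (simp add: c_def ennreal_mult[symmetric] ennreal_plus[symmetric] distrib_left del: ennreal_plus)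
  qed
  also have "\<dots> = ennreal c * (\<integral>\<^sup>+z. ennreal (dist z0 z powr p) \<partial>A)
      + ennreal (c * dist z0 z1 powr p) + ennreal c * (\<integral>\<^sup>+z. ennreal (dist z1 z powr p) \<partial>B)"
    using nn_integral_marginal[OF coupling_fst[OF \<gamma>], of "\<lambda>z. ennreal (dist z0 z powr p)"]
      nn_integral_marginal[OF coupling_snd[OF \<gamma>], of "\<lambda>z. ennreal (dist z1 z powr p)"]
    by (simp add: nn_integral_add nn_integral_cmult emeasure_space_1)
  also have "\<dots> < \<infinity>"
    using z0 z1 by (simp add: ennreal_mult_less_top)
  finally show ?thesis unfolding \<gamma>_def .
qed

lemma nearly_optimal_coupling:
  fixes A B :: "'a::{metric_space,second_countable_topology} measure"
  assumes "A \<in> Pp p" "B \<in> Pp p" "0 < p" "0 < \<epsilon>"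
  obtains \<gamma> C where "\<gamma> \<in> couplings A B" "transport_cost p \<gamma> = ennreal C" "0 \<le> C"
    "C powr (1/p) < wasserstein p A B + \<epsilon>"
proof -
  define I where "I = (INF \<gamma>\<in>couplings A B. transport_cost p \<gamma>)"
  define W where "W = wasserstein p A B"
  have "I \<le> transport_cost p (A \<Otimes>\<^sub>M B)"
    unfolding I_def using assms(1,2)
    by (intro INF_lower pair_measure_in_couplings) (simp_all add: Pp_imp_borel_prob)
  also have "\<dots> < \<infinity>"
    by (rule transport_cost_pair_measure_finite[OF assms(1-3)])
  finally have I_finite: "I = ennreal (enn2real I)"
    by simp
  have "enn2real I = W powr p"
    using assms(3) by (simp add: W_def wasserstein_eq_INF_transport_cost I_def[symmetric] powr_powr)
  also have "\<dots> < (W + \<epsilon>) powr p"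
    using assms(3,4) by (intro powr_less_mono2) (simp_all add: W_def wasserstein_def)
  finally have "I < ennreal ((W + \<epsilon>) powr p)"
    by (subst I_finite) (simp add: ennreal_less_iff)
  then obtain \<gamma> where \<gamma>: "\<gamma> \<in> couplings A B" and cost: "transport_cost p \<gamma> < ennreal ((W + \<epsilon>) powr p)"
    unfolding I_def by (auto simp: INF_less_iff)
  define C where "C = enn2real (transport_cost p \<gamma>)"
  have C: "transport_cost p \<gamma> = ennreal C"
    using order.strict_trans[OF cost ennreal_less_top] by (simp add: C_def)
  have "0 \<le> C" by (simp add: C_def)
  then have "C < (W + \<epsilon>) powr p"
    using cost by (simp add: C ennreal_less_iff)
  then have "C powr (1/p) < ((W + \<epsilon>) powr p) powr (1/p)"
    using assms(3) \<open>0 \<le> C\<close> by (intro powr_less_mono2) simp_all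
  also have "\<dots> = W + \<epsilon>"
    using assms(3,4) by (simp add: powr_powr W_def wasserstein_def add_nonneg_pos)
  finally show thesis
    using that \<gamma> C \<open>0 \<le> C\<close> by (simp add: W_def)
qed

lemma Lq_norm_nonneg: "0 \<le> Lq_norm q Q G"
  by (simp add: Lq_norm_def Let_def)

lemma Lq_norm_le_erealE:
  assumes "Lq_norm q Q G \<le> ereal m"
  obtains a where "(\<integral>\<^sup>+z. ennreal (G z powr q) \<partial>Q) = ennreal a" "0 \<le> a" "a powr (1/q) \<le> m"
proof -
  define I where "I = (\<integral>\<^sup>+z. ennreal (G z powr q) \<partial>Q)"
  from assms have "I \<noteq> \<infinity>" and "enn2real I powr (1/q) \<le> m"
    by (auto simp: Lq_norm_def Let_def I_def[symmetric] split: if_splits)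
  then show thesis
    using that[of "enn2real I"] by (simp add: I_def[symmetric] less_top)
qed

context
  fixes p q :: real and l G :: "'a::{metric_space,second_countable_topology} \<Rightarrow> real"
  assumes exponents: "1 < p" "1 < q" "1/p + 1/q = 1"
    and l_borel[measurable]: "l \<in> borel_measurable borel"
    and G_borel[measurable]: "G \<in> borel_measurable borel" and G_nonneg: "\<And>z. 0 \<le> G z"
    and l_lipschitz: "\<And>z z'. \<bar>l z' - l z\<bar> \<le> (G z + G z') / 2 * dist z z'"
begin

lemma nn_integral_marginal_mult_cost_le:
  fixes \<gamma> :: "('a \<times> 'a) measure"
  assumes \<gamma>: "\<gamma> \<in> couplings A B" and \<pi>: "\<pi> \<in> \<gamma> \<rightarrow>\<^sub>M borel" "distr \<gamma> borel \<pi> = R"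
    and cost: "transport_cost p \<gamma> = ennreal C" "0 \<le> C" and "Lq_norm q R G \<le> ereal m"
  shows "(\<integral>\<^sup>+x. ennreal (G (\<pi> x) * dist (fst x) (snd x)) \<partial>\<gamma>) \<le> ennreal (m * C powr (1/p))"
proof -
  note [measurable] = \<pi>(1) coupling_fst(1)[OF \<gamma>] coupling_snd(1)[OF \<gamma>]
  obtain r where r: "(\<integral>\<^sup>+z. ennreal (G z powr q) \<partial>R) = ennreal r" "0 \<le> r" "r powr (1/q) \<le> m"
    using Lq_norm_le_erealE[OF assms(6)] .
  have "1/q + 1/p = 1" using exponents by simp
  then have "(\<integral>\<^sup>+x. ennreal (G (\<pi> x) * dist (fst x) (snd x)) \<partial>\<gamma>) \<le> ennreal (r powr (1/q) * C powr (1/p))"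
    using nn_integral_marginal[OF \<pi>, of "\<lambda>z. ennreal (G z powr q)"] r(1,2) cost G_nonneg exponents
    by (intro nn_integral_Holder) (simp_all add: transport_cost_def)
  also have "\<dots> \<le> ennreal (m * C powr (1/p))"
    using r(3) by (intro ennreal_leI mult_right_mono) simp_all
  finally show ?thesis .
qed

lemma risk_diff_le_coupling:
  assumes \<gamma>: "\<gamma> \<in> couplings A B" and cost: "transport_cost p \<gamma> = ennreal C" "0 \<le> C"
    and "integrable A l" "integrable B l"
    and "Lq_norm q A G \<le> ereal m" "Lq_norm q B G \<le> ereal m"
  shows "\<bar>risk B l - risk A l\<bar> \<le> m * C powr (1/p)"
proof -
  interpret prob_space \<gamma> by (rule prob_space_coupling[OF \<gamma>])
  note [measurable] = coupling_fst(1)[OF \<gamma>] coupling_snd(1)[OF \<gamma>]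
  have "0 \<le> m"
    using order.trans[OF Lq_norm_nonneg assms(6)] by simp
  have "ennreal \<bar>l (snd x) - l (fst x)\<bar> \<le>
      (ennreal (G (fst x) * dist (fst x) (snd x)) + ennreal (G (snd x) * dist (fst x) (snd x))) / 2" for x
    using l_lipschitz[of "snd x" "fst x"] G_nonneg[of "fst x"] G_nonneg[of "snd x"]
    by (simp add: ennreal_divide_numeral ennreal_plus[symmetric] algebra_simps del: ennreal_plus)
  then have "(\<integral>\<^sup>+x. ennreal \<bar>l (snd x) - l (fst x)\<bar> \<partial>\<gamma>) \<le>
      (\<integral>\<^sup>+x. (ennreal (G (fst x) * dist (fst x) (snd x)) + ennreal (G (snd x) * dist (fst x) (snd x))) / 2 \<partial>\<gamma>)"
    by (intro nn_integral_mono)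
  also have "\<dots> \<le> (ennreal (m * C powr (1/p)) + ennreal (m * C powr (1/p))) / 2"
    using nn_integral_marginal_mult_cost_le[OF \<gamma> coupling_fst[OF \<gamma>] cost assms(6)]
      nn_integral_marginal_mult_cost_le[OF \<gamma> coupling_snd[OF \<gamma>] cost assms(7)]
    by (simp add: nn_integral_divide nn_integral_add divide_right_mono_ennreal add_mono)
  also have "\<dots> = ennreal (m * C powr (1/p))"
    using \<open>0 \<le> m\<close> by (simp add: ennreal_divide_numeral ennreal_plus[symmetric] del: ennreal_plus)
  finally have "enn2real (\<integral>\<^sup>+x. ennreal \<bar>l (snd x) - l (fst x)\<bar> \<partial>\<gamma>) \<le> m * C powr (1/p)"
    using \<open>0 \<le> m\<close> by (intro enn2real_leI) simp_all
  then have abs_bound: "(\<integral>x. \<bar>l (snd x) - l (fst x)\<bar> \<partial>\<gamma>) \<le> m * C powr (1/p)"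
    by (simp add: integral_eq_nn_integral)
  have "risk B l - risk A l = (\<integral>x. l (snd x) - l (fst x) \<partial>\<gamma>)"
    using integral_marginal[OF coupling_fst[OF \<gamma>] l_borel assms(4)]
      integral_marginal[OF coupling_snd[OF \<gamma>] l_borel assms(5)]
    by (simp add: risk_def)
  also have "\<bar>\<dots>\<bar> \<le> (\<integral>x. \<bar>l (snd x) - l (fst x)\<bar> \<partial>\<gamma>)"
    by (rule integral_abs_bound)
  finally show ?thesis using abs_bound by simp
qed

lemma risk_diff_le_wasserstein:
  assumes "A \<in> Pp p" "B \<in> Pp p" "integrable A l" "integrable B l"
    and "Lq_norm q A G \<le> ereal m" "Lq_norm q B G \<le> ereal m"
  shows "\<bar>risk B l - risk A l\<bar> \<le> m * wasserstein p A B"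
proof (rule field_le_epsilon)
  fix e :: real assume "0 < e"
  have "0 \<le> m"
    using order.trans[OF Lq_norm_nonneg assms(5)] by simp
  then obtain \<gamma> C where \<gamma>: "\<gamma> \<in> couplings A B" "transport_cost p \<gamma> = ennreal C" "0 \<le> C"
      and C: "C powr (1/p) < wasserstein p A B + e / (m + 1)"
    using nearly_optimal_coupling[OF assms(1,2), of "e / (m + 1)"] exponents \<open>0 < e\<close> by auto
  have "\<bar>risk B l - risk A l\<bar> \<le> m * C powr (1/p)"
    using \<gamma> assms(3-6) by (rule risk_diff_le_coupling)
  also have "\<dots> \<le> m * wasserstein p A B + m * (e / (m + 1))"
    using mult_left_mono[OF less_imp_le[OF C] \<open>0 \<le> m\<close>] by (simp add: distrib_left)
  also have "m * (e / (m + 1)) \<le> e"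
    using \<open>0 \<le> m\<close> \<open>0 < e\<close> by (simp add: field_simps)
  finally show "\<bar>risk B l - risk A l\<bar> \<le> m * wasserstein p A B + e" by simp
qed

lemma worst_risk_le_risk_plus:
  assumes "P \<in> Pp p" "0 \<le> \<alpha>" "Q \<in> wball p \<alpha> P"
    and integrable: "\<And>R. R \<in> wball p \<alpha> P \<Longrightarrow> integrable R l"
    and norm_bound: "\<And>R. R \<in> wball p \<alpha> P \<Longrightarrow> Lq_norm q R G \<le> ereal m"
  shows "worst_risk p \<alpha> P l \<le> ereal (risk Q l + 2 * \<alpha> * m)"
proof -
  have "P \<in> wball p \<alpha> P"
    using assms(1,2) by (simp add: wball_def wasserstein_self Pp_imp_borel_prob)
  have "0 \<le> m"
    using order.trans[OF Lq_norm_nonneg norm_bound[OF \<open>P \<in> wball p \<alpha> P\<close>]] by simp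
  have near_centre: "\<bar>risk R l - risk P l\<bar> \<le> m * \<alpha>" if R: "R \<in> wball p \<alpha> P" for R
  proof -
    have "\<bar>risk R l - risk P l\<bar> \<le> m * wasserstein p P R"
      using R \<open>P \<in> wball p \<alpha> P\<close>
      by (intro risk_diff_le_wasserstein integrable norm_bound) (simp_all add: wball_def)
    also have "\<dots> \<le> m * \<alpha>"
      using R \<open>0 \<le> m\<close> by (simp add: wball_def mult_left_mono)
    finally show ?thesis .
  qed
  show ?thesis
    unfolding worst_risk_def
  proof (rule SUP_least)
    fix R assume "R \<in> wball p \<alpha> P"
    then show "ereal (risk R l) \<le> ereal (risk Q l + 2 * \<alpha> * m)"
      using near_centre[OF assms(3)] near_centre[of R] by (simp add: abs_le_iff algebra_simps)
  qed
qed

end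

theorem mainTheorem5:
  fixes P :: "'a::polish_space measure"
    and l G :: "'a \<Rightarrow> real"
    and p q \<alpha> :: real
    and \<mu> :: ereal
  assumes "1 < p" and "q = p / (p - 1)" and "0 < \<alpha>"
    and "P \<in> Pp p"
    and "l \<in> borel_measurable borel"
    and "\<forall>Q\<in>wball p \<alpha> P. integrable Q l"
    and "G \<in> borel_measurable borel" and "\<forall>z. 0 \<le> G z"
    and "\<forall>z z'. \<exists>\<rho>. constant_speed_geodesic \<rho> z z' \<and>
            \<bar>l z' - l z\<bar> \<le> (LBINT t=0..1. G (\<rho> t)) * dist z z' \<and>
            (\<forall>t\<in>{0..1}. G (\<rho> t) \<le> (1 - t) * G z + t * G z')"
    and "\<mu> = (SUP Q\<in>wball p \<alpha> P. Lq_norm q Q G)"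
  shows "\<forall>Q\<in>wball p \<alpha> P.
           ereal (risk Q l) \<le> worst_risk p \<alpha> P l \<and>
           worst_risk p \<alpha> P l \<le> ereal (risk Q l) + 2 * ereal \<alpha> * \<mu>"
proof -
  have exponents: "1 < q" "1/p + 1/q = 1"
    using assms(1) by (simp_all add: assms(2) less_divide_eq add_divide_distrib[symmetric])
  \<comment> \<open>only the two inequalities along \<open>\<rho>\<close> matter\<close>
  have lipschitz: "\<bar>l z' - l z\<bar> \<le> (G z + G z') / 2 * dist z z'" for z z'
    using assms(8,9) abs_diff_le_mean_slope_of_path by metis
  have norm_bound: "Lq_norm q R G \<le> \<mu>" if "R \<in> wball p \<alpha> P" for R
    unfolding assms(10) using that by (rule SUP_upper)
  have "P \<in> wball p \<alpha> P"
    using assms(3,4) by (simp add: wball_def wasserstein_self Pp_imp_borel_prob)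
  then have "0 \<le> \<mu>"
    using order.trans[OF Lq_norm_nonneg norm_bound] by blast
  show ?thesis
  proof (intro ballI conjI)
    fix Q assume Q: "Q \<in> wball p \<alpha> P"
    show "ereal (risk Q l) \<le> worst_risk p \<alpha> P l"
      unfolding worst_risk_def using Q by (rule SUP_upper)
    show "worst_risk p \<alpha> P l \<le> ereal (risk Q l) + 2 * ereal \<alpha> * \<mu>"
    proof (cases \<mu>)
      case (real m)
      have "worst_risk p \<alpha> P l \<le> ereal (risk Q l + 2 * \<alpha> * m)"
        using assms(1,3-8) exponents lipschitz Q norm_bound
        by (intro worst_risk_le_risk_plus[of p q l G]) (simp_all add: real)
      then show ?thesis by (simp add: real)
    qed (use \<open>0 \<le> \<mu>\<close> assms(3) in simp_all)
  qed
qed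

end
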